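(* Let $\pi$ be a probability density on $(0,\infty)$ for which there exist $c>0$, $C>0$, $M_0>0$ such that $t\pi(t)\sim C/(\{1+\log(1+t)\}[1+\log\{1+\log(1+t)\}]^{1+c})$ as $t\to\infty$ and, for all $t>0$, $$t\pi(t)\le M_0\frac{1}{1+\log(1+1/t)}\frac{1}{1+\log(1+t)}\frac{1}{[1+\log\{1+\log(1+1/t)\}]^{1+c}}\frac{1}{[1+\log\{1+\log(1+t)\}]^{1+c}}.$$ For $\alpha>0$, $z\in\mathbb{R}$, $\gamma>0$, $t>0$ let $$f(\alpha,z,\gamma;t)=\int_0^\infty\frac{\alpha^\alpha\gamma}{\Gamma(\alpha)}\frac{e^{-\alpha/u}}{u^{1+\alpha}}\cdot\frac{t^\gamma e^{\gamma z}u\,\pi(t^\gamma e^{\gamma z}u)}{C/(\{1+\log(1+t)\}[1+\log\{1+\log(1+t)\}]^{1+c})}\,du.$$ Let $N>0$, let $t>0$ be fixed and let $x\in\mathbb{R}^p$. Then there exists $M>0$ such that for all $(\alpha,\tilde\beta,\gamma)\in(0,\infty)\times\mathbb{R}^p\times(0,\infty)$ with $|\log t+x^\top\tilde\beta|\ge N$, $$f(\alpha,x^\top\tilde\beta,\gamma;t)\le M\{1+\log(1+\gamma)\}.$$ *)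

theory Defs
  imports "HOL-Analysis.Analysis" "HOL-Library.Landau_Symbols"
begin

definition tailfun :: "real \<Rightarrow> real \<Rightarrow> real \<Rightarrow> real" where
  "tailfun c C t = C / ((1 + ln (1 + t)) * (1 + ln (1 + ln (1 + t))) powr (1 + c))"

definition prob_density_pos :: "(real \<Rightarrow> real) \<Rightarrow> bool" where
  "prob_density_pos \<pi> \<longleftrightarrow> \<pi> \<in> borel_measurable lborel \<and> (\<forall>t>0. 0 \<le> \<pi> t)
     \<and> (\<integral>\<^sup>+ t \<in> {0<..}. ennreal (\<pi> t) \<partial>lborel) = 1"

definition fS :: "(real \<Rightarrow> real) \<Rightarrow> real \<Rightarrow> real \<Rightarrow> real \<Rightarrow> real \<Rightarrow> real \<Rightarrow> real \<Rightarrow> ennreal" where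
  "fS \<pi> c C \<alpha> z \<gamma> t =
     (\<integral>\<^sup>+ u \<in> {0<..}. ennreal (
        (\<alpha> powr \<alpha> * \<gamma> / Gamma \<alpha>) * (exp (- \<alpha> / u) / u powr (1 + \<alpha>)) *
        ((t powr \<gamma> * exp (\<gamma> * z) * u * \<pi> (t powr \<gamma> * exp (\<gamma> * z) * u)) / tailfun c C t))
      \<partial>lborel)"

end

theory Submission
  imports Defs "HOL-Real_Asymp.Real_Asymp"
begin

(* Write z for x \<bullet> \<beta> and w = t^\<gamma> e^(\<gamma> z) = exp (\<gamma> a) with a = ln t + z, so |a| \<ge> N.
   Then f is \<gamma> times the average of w u \<pi>(w u) / tailfun(t) against the inverse-gamma density
   q\<^sub>\<alpha>(u), and the pointwise hypothesis bounds w u \<pi>(w u) by M\<^sub>0 h(w u), where the two-sided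
   log-log envelope h satisfies h(s) \<le> 1 / (1 + |ln s|) and has h(s)/s integrable on (0, \<infinity>)
   (it is dominated by the derivative of an explicit bounded primitive).
   If \<gamma> N \<le> 4, the factor \<gamma> is bounded and q\<^sub>\<alpha> has mass 1. Otherwise split at
   |ln u| = \<gamma> |a| / 2: for smaller |ln u| we have |ln (w u)| \<ge> \<gamma> N / 2, so \<gamma> h(w u) \<le> 2 / N;
   for larger |ln u| we have ln u + 1/u - 1 \<ge> \<gamma> N / 4, and u q\<^sub>\<alpha>(u) (ln u + 1/u - 1) \<le> 1
   (from Gamma \<alpha> \<ge> \<alpha>^(\<alpha>-1) e^(-\<alpha>-1)) gives \<gamma> q\<^sub>\<alpha>(u) \<le> 4 / (N u), leaving the
   dilation-invariant integral of h(s)/s. *)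

section \<open>The inverse-gamma density\<close>

lemma Gamma_ge_powr_exp:
  fixes a :: real
  assumes a: "a > 0"
  shows "a powr (a - 1) * exp (- (a + 1)) \<le> Gamma a"
proof -
  let ?f = "\<lambda>t::real. t powr a / exp t"
  have piece: "(?f has_integral integral {a..a+1} ?f) {a..a+1}"
    using a by (intro integrable_integral integrable_continuous_interval continuous_intros) auto
  have whole: "(?f has_integral Gamma (a + 1)) {0..}"
    using Gamma_integral_real[of "a + 1"] a by simp
  have upper: "integral {a..a+1} ?f \<le> Gamma (a + 1)"
    by (rule has_integral_subset_le[OF _ piece whole]) (use a in auto)
  have "a powr a * exp (- (a + 1)) \<le> ?f s" if "s \<in> {a..a+1}" for s
  proof -
    have "a powr a \<le> s powr a" using that a by (intro powr_mono2) auto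
    moreover have "exp (- (a + 1)) \<le> inverse (exp s)" using that by (simp flip: exp_minus)
    ultimately show ?thesis by (simp add: divide_inverse mult_mono)
  qed
  then have "integral {a..a+1} (\<lambda>_. a powr a * exp (- (a + 1))) \<le> integral {a..a+1} ?f"
    using a by (intro integral_le integrable_continuous_interval continuous_intros) auto
  then have "a powr a * exp (- (a + 1)) \<le> integral {a..a+1} ?f"
    by simp
  moreover have "Gamma (a + 1) = a * Gamma a"
    using a by (intro Gamma_plus1) (auto elim!: nonpos_Ints_cases)
  moreover have "a powr a = a * a powr (a - 1)"
    using a by (simp add: powr_diff)
  ultimately have "a * (a powr (a - 1) * exp (- (a + 1))) \<le> a * Gamma a"
    using upper by (simp add: mult.assoc)
  then show ?thesis
    using a by simp
qed

definition inv_gamma_density :: "real \<Rightarrow> real \<Rightarrow> real" where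
  "inv_gamma_density a u = a powr a / Gamma a * (exp (- a / u) / u powr (1 + a))"

lemma inv_gamma_density_nonneg: "a > 0 \<Longrightarrow> 0 \<le> inv_gamma_density a u"
  by (simp add: inv_gamma_density_def Gamma_real_pos)

lemma borel_measurable_inv_gamma_density [measurable]:
  "inv_gamma_density a \<in> borel_measurable borel"
  unfolding inv_gamma_density_def by measurable

lemma nn_integral_inv_gamma_density:
  assumes a: "a > 0"
  shows "(\<integral>\<^sup>+u\<in>{0<..}. ennreal (inv_gamma_density a u) \<partial>lborel) = 1"
proof -
  define f where "f = (\<lambda>s::real. s powr (a - 1) / exp s / Gamma a)"
  have "(f has_integral 1) {0..}"
    using has_integral_divide[OF Gamma_integral_real[OF a], of "Gamma a"] Gamma_real_pos[OF a]
    by (simp add: f_def)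
  then have f_int: "(f has_integral 1) {0<..}"
    using has_integral_interior[of "{0::real..}" f 1] by simp
  have f_abs: "f absolutely_integrable_on {0<..}"
    using f_int a by (intro nonnegative_absolutely_integrable_1) (auto simp: f_def Gamma_real_pos)
  have img: "(\<lambda>u. a / u) ` {0<..} = {0<..}"
  proof (intro equalityI subsetI)
    fix s :: real assume "s \<in> {0<..}"
    then show "s \<in> (\<lambda>u. a / u) ` {0<..}"
      using a by (intro image_eqI[of _ _ "a / s"]) auto
  qed (use a in auto)
  have inj: "inj_on (\<lambda>u. a / u) {0<..}"
    using a by (auto simp: inj_on_def field_simps)
  have deriv: "((\<lambda>u. a / u) has_field_derivative - a / u\<^sup>2) (at u within {0<..})"
    if "u \<in> {0<..}" for u
    using that by (auto intro!: derivative_eq_intros simp: power2_eq_square)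
  have "(\<lambda>u. \<bar>- a / u\<^sup>2\<bar> * f (a / u)) absolutely_integrable_on {0<..} \<and>
        integral {0<..} (\<lambda>u. \<bar>- a / u\<^sup>2\<bar> * f (a / u)) = 1"
    using has_absolute_integral_change_of_variables_1'[of "{0<..}" "\<lambda>u. a / u" "\<lambda>u. - a / u\<^sup>2" f 1]
      deriv inj img f_abs f_int by (simp add: integral_unique)
  then have "((\<lambda>u. \<bar>- a / u\<^sup>2\<bar> * f (a / u)) has_integral 1) {0<..}"
    by (metis absolutely_integrable_on_def has_integral_integral)
  moreover have "\<bar>- a / u\<^sup>2\<bar> * f (a / u) = inv_gamma_density a u" if u: "u > 0" for u
  proof -
    have "a * a powr (a - 1) = a powr a"
      using a by (simp add: powr_diff)
    moreover have "u\<^sup>2 * u powr (a - 1) = u powr (1 + a)"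
      using u by (simp add: powr_add powr_diff power2_eq_square)
    moreover have "\<bar>- a / u\<^sup>2\<bar> * f (a / u) = (a * a powr (a - 1)) / (u\<^sup>2 * u powr (a - 1)) / exp (a / u) / Gamma a"
      using a u by (simp add: f_def powr_divide)
    ultimately show ?thesis
      by (simp add: inv_gamma_density_def exp_minus divide_inverse mult_ac)
  qed
  ultimately have "(inv_gamma_density a has_integral 1) {0<..}"
    using has_integral_cong[of "{0<..}" "\<lambda>u. \<bar>- a / u\<^sup>2\<bar> * f (a / u)" "inv_gamma_density a" 1]
    by simp
  then show ?thesis
    using nn_integral_has_integral_lebesgue'[of "{0<..}" "inv_gamma_density a" 1]
      inv_gamma_density_nonneg[OF a] by simp
qed

lemma mult_exp_minus_le: "exp 1 * (x * exp (- x)) \<le> (1::real)"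
proof -
  have "1 + (x - 1) \<le> exp (x - 1)"
    by (rule exp_ge_add_one_self)
  then show ?thesis
    by (simp add: exp_diff exp_minus field_simps)
qed

lemma inv_gamma_density_mult_le:
  assumes a: "a > 0" and u: "u > 0"
  shows "u * inv_gamma_density a u * (ln u + 1 / u - 1) \<le> 1"
proof -
  define p where "p = ln u + 1 / u - 1"
  have "ln (1 / u) \<le> 1 / u - 1"
    using u by (intro ln_le_minus_one) auto
  then have p_nonneg: "0 \<le> p"
    using u by (simp add: p_def ln_div)
  have "u powr (1 + a) = u * u powr a"
    using u by (simp add: powr_add)
  have "u * inv_gamma_density a u = a powr a / Gamma a * (u * (exp (- a / u) / u powr (1 + a)))"
    unfolding inv_gamma_density_def by (rule mult.left_commute)
  also have "u * (exp (- a / u) / u powr (1 + a)) = exp (- a / u) / u powr a"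
    using u \<open>u powr (1 + a) = u * u powr a\<close> by simp
  also have "\<dots> = exp (- a / u - a * ln u)"
    using u by (simp add: powr_def exp_diff mult.commute)
  also have "exp (- a / u - a * ln u) = exp (- a * (p + 1))"
    using u by (simp add: p_def field_simps)
  also have "a powr a / Gamma a * exp (- a * (p + 1))
      \<le> a powr a / (a powr (a - 1) * exp (- (a + 1))) * exp (- a * (p + 1))"
    using a Gamma_ge_powr_exp[OF a] by (intro mult_right_mono divide_left_mono) auto
  also have "a powr a / (a powr (a - 1) * exp (- (a + 1))) = a * exp (a + 1)"
    using a by (simp add: powr_diff exp_minus field_simps flip: exp_add)
  also have "a * exp (a + 1) * exp (- a * (p + 1)) = a * exp 1 * exp (- (a * p))"
    by (simp only: mult.assoc flip: exp_add) (simp add: algebra_simps)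
  finally have "u * inv_gamma_density a u * p \<le> a * exp 1 * exp (- (a * p)) * p"
    using p_nonneg by (rule mult_right_mono)
  also have "\<dots> \<le> 1"
    using mult_exp_minus_le[of "a * p"] by (simp add: mult_ac)
  finally show ?thesis
    by (simp add: p_def)
qed

lemma ln_add_inverse_ge:
  fixes u K :: real
  assumes u: "u > 0" and K: "K \<ge> 2" and large: "\<bar>ln u\<bar> \<ge> K"
  shows "ln u + 1 / u - 1 \<ge> K / 2"
proof (cases "ln u \<ge> 0")
  case True
  then have "ln u \<ge> K"
    using large by simp
  moreover have "1 / u > 0"
    using u by simp
  ultimately show ?thesis
    using K by linarith
next
  case False
  define y where "y = - ln u"
  have y: "y \<ge> K"
    using False large by (simp add: y_def)
  have "1 / u = exp y"
    using u by (simp add: y_def exp_minus inverse_eq_divide)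
  moreover have "1 + y + y\<^sup>2 / 2 \<le> exp y"
    using y K by (intro exp_lower_Taylor_quadratic) auto
  moreover have "y \<le> y\<^sup>2 / 2"
    using y K by (simp add: power2_eq_square)
  ultimately show ?thesis
    using y K by (simp add: y_def)
qed

section \<open>The two-sided log-log envelope\<close>

lemma one_plus_ln_one_plus_pos:
  fixes r :: real
  assumes "r \<ge> 0"
  shows "0 < 1 + ln (1 + r)" and "0 < 1 + ln (1 + ln (1 + r))"
proof -
  have "0 \<le> ln (1 + r)"
    using assms by simp
  moreover have "0 \<le> ln (1 + ln (1 + r))"
    using assms by (intro ln_ge_zero) simp
  ultimately show "0 < 1 + ln (1 + r)" and "0 < 1 + ln (1 + ln (1 + r))"
    by linarith+
qed

definition loglog_decay :: "real \<Rightarrow> real \<Rightarrow> real" where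
  "loglog_decay c s = 1 / ((1 + ln (1 + s)) * (1 + ln (1 + ln (1 + s))) powr (1 + c))"

definition loglog_envelope :: "real \<Rightarrow> real \<Rightarrow> real" where
  "loglog_envelope c s = loglog_decay c (1 / s) * loglog_decay c s"

lemma loglog_decay_pos: "s \<ge> 0 \<Longrightarrow> 0 < loglog_decay c s"
  using one_plus_ln_one_plus_pos[of s] by (simp add: loglog_decay_def)

lemma loglog_decay_le:
  assumes "s \<ge> 0" and "c \<ge> -1"
  shows "loglog_decay c s \<le> 1 / (1 + ln (1 + s))"
proof -
  have "1 \<le> (1 + ln (1 + ln (1 + s))) powr (1 + c)"
    using assms by (intro ge_one_powr_ge_zero) auto
  then show ?thesis
    using assms by (simp add: loglog_decay_def divide_simps add_pos_nonneg)
qed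

lemma loglog_decay_le_one:
  assumes "s \<ge> 0" and "c \<ge> -1"
  shows "loglog_decay c s \<le> 1"
proof -
  have "0 \<le> ln (1 + s)"
    using assms by simp
  then have "1 / (1 + ln (1 + s)) \<le> 1"
    by (simp add: divide_le_eq_1)
  then show ?thesis
    using loglog_decay_le[OF assms] by linarith
qed

lemma loglog_envelope_nonneg: "s > 0 \<Longrightarrow> 0 \<le> loglog_envelope c s"
  using loglog_decay_pos[of s c] loglog_decay_pos[of "1 / s" c] by (simp add: loglog_envelope_def)

lemma loglog_envelope_le:
  assumes s: "s > 0" and c: "c \<ge> -1"
  shows "loglog_envelope c s \<le> 1 / (1 + \<bar>ln s\<bar>)"
proof (cases "s \<ge> 1")
  case True
  have "loglog_envelope c s \<le> loglog_decay c s"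
    using s c loglog_decay_pos[of s c] loglog_decay_le_one[of "1 / s" c]
    by (simp add: loglog_envelope_def mult_left_le_one_le)
  also have "\<dots> \<le> 1 / (1 + ln (1 + s))"
    using s c by (intro loglog_decay_le) auto
  also have "\<dots> \<le> 1 / (1 + \<bar>ln s\<bar>)"
    using s True by (intro divide_left_mono) (auto simp: add_pos_nonneg)
  finally show ?thesis .
next
  case False
  have "loglog_envelope c s \<le> loglog_decay c (1 / s)"
    using s c loglog_decay_pos[of "1 / s" c] loglog_decay_le_one[of s c]
    by (simp add: loglog_envelope_def mult_right_le_one_le)
  also have "\<dots> \<le> 1 / (1 + ln (1 + 1 / s))"
    using s c by (intro loglog_decay_le) auto
  also have "\<dots> \<le> 1 / (1 + \<bar>ln s\<bar>)"
  proof -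
    have "\<bar>ln s\<bar> = ln (1 / s)"
      using s False by (simp add: ln_div)
    also have "\<dots> \<le> ln (1 + 1 / s)"
      using s by (subst ln_le_cancel_iff) (auto intro: add_pos_pos)
    finally show ?thesis
      by (intro divide_left_mono) (auto simp: add_pos_nonneg)
  qed
  finally show ?thesis .
qed

lemma borel_measurable_loglog_decay [measurable]: "loglog_decay c \<in> borel_measurable borel"
  unfolding loglog_decay_def by measurable

lemma borel_measurable_loglog_envelope [measurable]: "loglog_envelope c \<in> borel_measurable borel"
  unfolding loglog_envelope_def by measurable

lemma has_real_derivative_loglog_power:
  assumes s: "s \<ge> 0" and c: "c \<noteq> 0"
  shows "((\<lambda>r. (1 + ln (1 + ln (1 + r))) powr (- c) / c) has_real_derivative
           - loglog_decay c s / (1 + s)) (at s)"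
proof -
  define B where "B = 1 + ln (1 + ln (1 + s))"
  have pos: "0 < 1 + ln (1 + s)" "B > 0"
    using one_plus_ln_one_plus_pos[OF s] by (simp_all add: B_def)
  have "- c - 1 = - (1 + c)"
    by simp
  then have "B powr (- c - 1) = 1 / B powr (1 + c)"
    by (simp only: powr_minus_divide)
  then show ?thesis
    using s c pos unfolding B_def
    by (auto intro!: derivative_eq_intros simp: add_pos_nonneg loglog_decay_def)
qed

definition loglog_primitive :: "real \<Rightarrow> real \<Rightarrow> real" where
  "loglog_primitive c s =
     (1 + ln (1 + ln (1 + 1 / s))) powr (- c) / c - (1 + ln (1 + ln (1 + s))) powr (- c) / c"

definition loglog_kernel :: "real \<Rightarrow> real \<Rightarrow> real" where
  "loglog_kernel c s = (loglog_decay c s + loglog_decay c (1 / s) / s) / (1 + s)"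

lemma has_real_derivative_loglog_primitive:
  assumes s: "s > 0" and c: "c \<noteq> 0"
  shows "(loglog_primitive c has_real_derivative loglog_kernel c s) (at s)"
proof -
  have "((\<lambda>r. 1 / r) has_real_derivative - 1 / s\<^sup>2) (at s)"
    using s by (auto intro!: derivative_eq_intros simp: power2_eq_square)
  then have "((\<lambda>r. (1 + ln (1 + ln (1 + 1 / r))) powr (- c) / c) has_real_derivative
              - loglog_decay c (1 / s) / (1 + 1 / s) * (- 1 / s\<^sup>2)) (at s)"
    using s c by (intro DERIV_chain2[OF has_real_derivative_loglog_power]) auto
  then have "(loglog_primitive c has_real_derivative
      - loglog_decay c (1 / s) / (1 + 1 / s) * (- 1 / s\<^sup>2) - - loglog_decay c s / (1 + s)) (at s)"
    unfolding loglog_primitive_def[abs_def]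
    using s c by (intro DERIV_diff has_real_derivative_loglog_power) auto
  moreover have "- loglog_decay c (1 / s) / (1 + 1 / s) * (- 1 / s\<^sup>2) - - loglog_decay c s / (1 + s)
      = loglog_kernel c s"
    using s by (simp add: loglog_kernel_def power2_eq_square divide_simps) (simp add: algebra_simps)
  ultimately show ?thesis
    by simp
qed

lemma loglog_primitive_at_top: "c > 0 \<Longrightarrow> (loglog_primitive c \<longlongrightarrow> inverse c) at_top"
  unfolding loglog_primitive_def by real_asymp

lemma loglog_primitive_at_0: "c > 0 \<Longrightarrow> (loglog_primitive c \<longlongrightarrow> - inverse c) (at_right 0)"
  unfolding loglog_primitive_def by real_asymp

lemma loglog_kernel_nonneg: "s > 0 \<Longrightarrow> 0 \<le> loglog_kernel c s"
  using loglog_decay_pos[of s c] loglog_decay_pos[of "1 / s" c]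
  by (simp add: loglog_kernel_def)

lemma isCont_loglog_kernel:
  assumes s: "s > 0"
  shows "isCont (loglog_kernel c) s"
proof -
  have "0 \<le> 1 / s"
    using s by simp
  then show ?thesis
    unfolding loglog_kernel_def[abs_def] loglog_decay_def
    using s one_plus_ln_one_plus_pos[of s] one_plus_ln_one_plus_pos[of "1 / s"]
    by (intro continuous_intros) (auto simp: less_imp_neq[symmetric] add_pos_nonneg)
qed

lemma borel_measurable_loglog_kernel [measurable]: "loglog_kernel c \<in> borel_measurable borel"
  unfolding loglog_kernel_def by measurable

lemma nn_integral_loglog_kernel_finite:
  assumes c: "c > 0"
  shows "(\<integral>\<^sup>+s\<in>{0<..}. ennreal (loglog_kernel c s) \<partial>lborel) < \<infinity>"
proof -
  have "set_integrable lborel (einterval 0 \<infinity>) (loglog_kernel c)"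
  proof (rule interval_integral_FTC_nonneg(1)[where F = "loglog_primitive c" and A = "- inverse c" and B = "inverse c"])
    show "((loglog_primitive c \<circ> real_of_ereal) \<longlongrightarrow> - inverse c) (at_right 0)"
      using loglog_primitive_at_0[OF c] by (simp add: zero_ereal_def ereal_tendsto_simps)
    show "((loglog_primitive c \<circ> real_of_ereal) \<longlongrightarrow> inverse c) (at_left \<infinity>)"
      using loglog_primitive_at_top[OF c] by (simp add: ereal_tendsto_simps)
  qed (use c has_real_derivative_loglog_primitive isCont_loglog_kernel loglog_kernel_nonneg in auto)
  then have "integrable lborel (\<lambda>s. indicator {0<..} s *\<^sub>R loglog_kernel c s)"
    by (simp add: set_integrable_def einterval_def greaterThan_def)
  then have "(\<integral>\<^sup>+s. ennreal (norm (indicator {0<..} s *\<^sub>R loglog_kernel c s)) \<partial>lborel) < \<infinity>"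
    by (simp add: integrable_iff_bounded)
  moreover have "(\<integral>\<^sup>+s. ennreal (norm (indicator {0<..} s *\<^sub>R loglog_kernel c s)) \<partial>lborel)
      = (\<integral>\<^sup>+s\<in>{0<..}. ennreal (loglog_kernel c s) \<partial>lborel)"
    by (intro nn_integral_cong) (auto simp: loglog_kernel_nonneg split: split_indicator)
  ultimately show ?thesis
    by simp
qed

lemma loglog_envelope_div_le_kernel:
  assumes s: "s > 0" and c: "c \<ge> -1"
  shows "loglog_envelope c s / s \<le> 2 * loglog_kernel c s"
proof -
  have d: "0 < loglog_decay c s" "loglog_decay c s \<le> 1"
    "0 < loglog_decay c (1 / s)" "loglog_decay c (1 / s) \<le> 1"
    using s c by (auto intro: loglog_decay_pos loglog_decay_le_one)
  show ?thesis
  proof (cases "s \<ge> 1")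
    case True
    have "loglog_envelope c s / s \<le> loglog_decay c s / s"
      using s d by (intro divide_right_mono) (auto simp: loglog_envelope_def mult_left_le_one_le)
    also have "\<dots> \<le> 2 * (loglog_decay c s / (1 + s))"
      using s d True by (simp add: field_simps)
    also have "\<dots> \<le> 2 * loglog_kernel c s"
      using s d by (simp add: loglog_kernel_def divide_right_mono)
    finally show ?thesis .
  next
    case False
    have "loglog_envelope c s / s \<le> loglog_decay c (1 / s) / s"
      using s d by (intro divide_right_mono) (auto simp: loglog_envelope_def mult_right_le_one_le)
    also have "\<dots> \<le> 2 * (loglog_decay c (1 / s) / s / (1 + s))"
    proof -
      define y where "y = loglog_decay c (1 / s) / s"
      have "y * (1 + s) \<le> y * 2"
        using s d False by (intro mult_left_mono) (auto simp: y_def)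
      then have "y \<le> 2 * (y / (1 + s))"
        using s by (simp add: field_simps)
      then show ?thesis
        unfolding y_def .
    qed
    also have "\<dots> \<le> 2 * loglog_kernel c s"
      using s d unfolding loglog_kernel_def by (intro mult_left_mono divide_right_mono) auto
    finally show ?thesis .
  qed
qed

lemma nn_integral_loglog_envelope_div_finite:
  assumes c: "c > 0"
  shows "(\<integral>\<^sup>+s\<in>{0<..}. ennreal (loglog_envelope c s / s) \<partial>lborel) < \<infinity>"
proof -
  have "(\<integral>\<^sup>+s\<in>{0<..}. ennreal (loglog_envelope c s / s) \<partial>lborel)
      \<le> (\<integral>\<^sup>+s. ennreal 2 * (ennreal (loglog_kernel c s) * indicator {0<..} s) \<partial>lborel)"
  proof (intro nn_integral_mono)
    fix s :: real
    have "s > 0 \<Longrightarrow> ennreal (loglog_envelope c s / s) \<le> ennreal (2 * loglog_kernel c s)"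
      using c by (intro ennreal_leI loglog_envelope_div_le_kernel) auto
    then show "ennreal (loglog_envelope c s / s) * indicator {0<..} s
        \<le> ennreal 2 * (ennreal (loglog_kernel c s) * indicator {0<..} s)"
      by (auto simp: ennreal_mult' split: split_indicator)
  qed
  also have "\<dots> = ennreal 2 * (\<integral>\<^sup>+s\<in>{0<..}. ennreal (loglog_kernel c s) \<partial>lborel)"
    by (intro nn_integral_cmult) measurable
  also have "\<dots> < \<infinity>"
    using nn_integral_loglog_kernel_finite[OF c] by (simp add: ennreal_mult_less_top)
  finally show ?thesis .
qed

lemma nn_integral_Ioi_dilation:
  fixes g :: "real \<Rightarrow> real"
  assumes [measurable]: "g \<in> borel_measurable borel" and w: "w > 0"
  shows "(\<integral>\<^sup>+u\<in>{0<..}. ennreal (g (w * u) / u) \<partial>lborel)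
       = (\<integral>\<^sup>+s\<in>{0<..}. ennreal (g s / s) \<partial>lborel)"
proof -
  have "(\<integral>\<^sup>+s\<in>{0<..}. ennreal (g s / s) \<partial>lborel)
      = ennreal w * (\<integral>\<^sup>+u. ennreal (g (w * u) / (w * u)) * indicator {0<..} (w * u) \<partial>lborel)"
    using nn_integral_real_affine[of "\<lambda>s. ennreal (g s / s) * indicator {0<..} s" w 0] w
    by simp
  also have "\<dots> = (\<integral>\<^sup>+u. ennreal w * (ennreal (g (w * u) / (w * u)) * indicator {0<..} (w * u)) \<partial>lborel)"
    by (rule nn_integral_cmult[symmetric]) measurable
  also have "\<dots> = (\<integral>\<^sup>+u\<in>{0<..}. ennreal (g (w * u) / u) \<partial>lborel)"
    using w by (intro nn_integral_cong)
      (auto simp: zero_less_mult_iff ennreal_mult'[symmetric] split: split_indicator)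
  finally show ?thesis ..
qed

section \<open>Inverse-gamma averages of the envelope\<close>

lemma inv_gamma_weight_split:
  fixes \<alpha> \<gamma> N a u y :: real
  assumes \<alpha>: "\<alpha> > 0" and u: "u > 0" and N: "N > 0" and large: "4 < \<gamma> * N" and a: "N \<le> \<bar>a\<bar>"
    and y: "0 \<le> y" "y \<le> 1 / (1 + \<bar>\<gamma> * a + ln u\<bar>)"
  shows "\<gamma> * inv_gamma_density \<alpha> u * y \<le> 2 / N * inv_gamma_density \<alpha> u + 4 / N * (y / u)"
proof -
  define q where "q = inv_gamma_density \<alpha> u"
  have q: "0 \<le> q"
    using \<alpha> by (simp add: q_def inv_gamma_density_nonneg)
  have "0 < \<gamma> * N"
    using large by linarith
  then have \<gamma>: "\<gamma> > 0"
    using N by (simp add: zero_less_mult_iff)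
  have \<gamma>a: "\<gamma> * N \<le> \<gamma> * \<bar>a\<bar>"
    using \<gamma> a by simp
  have "\<gamma> * q * y \<le> 2 / N * q + 4 / N * (y / u)"
  proof (cases "\<bar>ln u\<bar> < \<gamma> * \<bar>a\<bar> / 2")
    case True
    have "\<gamma> * \<bar>a\<bar> \<le> \<bar>\<gamma> * a + ln u\<bar> + \<bar>ln u\<bar>"
      using \<gamma> by (simp add: abs_mult abs_triangle_ineq4 flip: abs_of_pos)
    then have "1 + \<gamma> * N / 2 \<le> 1 + \<bar>\<gamma> * a + ln u\<bar>"
      using True \<gamma>a by linarith
    then have "y \<le> 1 / (1 + \<gamma> * N / 2)"
      using y(2) \<gamma> N by (smt (verit) divide_left_mono mult_pos_pos zero_less_divide_iff)
    then have "\<gamma> * y \<le> \<gamma> * (1 / (1 + \<gamma> * N / 2))"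
      using \<gamma> by (intro mult_left_mono) auto
    also have "\<dots> \<le> 2 / N"
      using \<gamma> N by (simp add: field_simps pos_divide_le_eq add_pos_pos)
    finally have "q * (\<gamma> * y) \<le> q * (2 / N)"
      using q by (intro mult_left_mono)
    moreover have "0 \<le> 4 / N * (y / u)"
      using N u y by simp
    ultimately show ?thesis
      by (simp add: mult_ac)
  next
    case False
    then have "\<gamma> * N / 2 \<le> \<bar>ln u\<bar>"
      using \<gamma>a by linarith
    then have "\<gamma> * N / 4 \<le> ln u + 1 / u - 1"
      using ln_add_inverse_ge[OF u, of "\<gamma> * N / 2"] large by simp
    then have "u * q * (\<gamma> * N / 4) \<le> u * q * (ln u + 1 / u - 1)"
      using u q by (intro mult_left_mono) auto
    also have "\<dots> \<le> 1"
      using inv_gamma_density_mult_le[OF \<alpha> u] by (simp add: q_def)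
    finally have "\<gamma> * q \<le> 4 / (N * u)"
      using u N by (simp add: field_simps)
    then have "\<gamma> * q * y \<le> 4 / (N * u) * y"
      using y by (intro mult_right_mono)
    moreover have "0 \<le> 2 / N * q"
      using N q by simp
    ultimately show ?thesis
      by simp
  qed
  then show ?thesis
    by (simp add: q_def)
qed

lemma nn_integral_inv_gamma_mixture_le_bounded:
  fixes g :: "real \<Rightarrow> real"
  assumes g: "\<And>s. s > 0 \<Longrightarrow> 0 \<le> g s" "\<And>s. s > 0 \<Longrightarrow> g s \<le> 1"
    and \<alpha>: "\<alpha> > 0" and \<gamma>: "\<gamma> \<ge> 0" and w: "w > 0"
  shows "(\<integral>\<^sup>+u\<in>{0<..}. ennreal (\<gamma> * inv_gamma_density \<alpha> u * g (w * u)) \<partial>lborel) \<le> ennreal \<gamma>"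
proof -
  have "(\<integral>\<^sup>+u\<in>{0<..}. ennreal (\<gamma> * inv_gamma_density \<alpha> u * g (w * u)) \<partial>lborel)
      \<le> (\<integral>\<^sup>+u. ennreal \<gamma> * (ennreal (inv_gamma_density \<alpha> u) * indicator {0<..} u) \<partial>lborel)"
  proof (intro nn_integral_mono)
    fix u :: real
    have "\<gamma> * inv_gamma_density \<alpha> u * g (w * u) \<le> \<gamma> * inv_gamma_density \<alpha> u" if "u > 0"
      using that w \<gamma> g[of "w * u"] inv_gamma_density_nonneg[OF \<alpha>, of u]
      by (intro mult_right_le_one_le mult_nonneg_nonneg) auto
    then show "ennreal (\<gamma> * inv_gamma_density \<alpha> u * g (w * u)) * indicator {0<..} u
        \<le> ennreal \<gamma> * (ennreal (inv_gamma_density \<alpha> u) * indicator {0<..} u)"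
      using \<gamma> by (auto simp: ennreal_mult'[symmetric] intro!: ennreal_leI split: split_indicator)
  qed
  also have "\<dots> = ennreal \<gamma>"
    using nn_integral_inv_gamma_density[OF \<alpha>] by (simp add: nn_integral_cmult)
  finally show ?thesis .
qed

lemma nn_integral_inv_gamma_mixture_le_far:
  fixes g :: "real \<Rightarrow> real"
  assumes [measurable]: "g \<in> borel_measurable borel"
    and g_nonneg: "\<And>s. s > 0 \<Longrightarrow> 0 \<le> g s"
    and g_le: "\<And>s. s > 0 \<Longrightarrow> g s \<le> 1 / (1 + \<bar>ln s\<bar>)"
    and N: "N > 0" and \<alpha>: "\<alpha> > 0" and large: "4 < \<gamma> * N" and a: "N \<le> \<bar>a\<bar>"
  shows "(\<integral>\<^sup>+u\<in>{0<..}. ennreal (\<gamma> * inv_gamma_density \<alpha> u * g (exp (\<gamma> * a) * u)) \<partial>lborel)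
         \<le> ennreal (2 / N) + ennreal (4 / N) * (\<integral>\<^sup>+s\<in>{0<..}. ennreal (g s / s) \<partial>lborel)"
proof -
  define w where "w = exp (\<gamma> * a)"
  have w: "w > 0"
    by (simp add: w_def)
  have "(\<integral>\<^sup>+u\<in>{0<..}. ennreal (\<gamma> * inv_gamma_density \<alpha> u * g (w * u)) \<partial>lborel)
      \<le> (\<integral>\<^sup>+u\<in>{0<..}. ennreal (2 / N) * ennreal (inv_gamma_density \<alpha> u)
            + ennreal (4 / N) * ennreal (g (w * u) / u) \<partial>lborel)"
  proof (intro nn_integral_mono)
    fix u :: real
    have "ennreal (\<gamma> * inv_gamma_density \<alpha> u * g (w * u))
        \<le> ennreal (2 / N) * ennreal (inv_gamma_density \<alpha> u) + ennreal (4 / N) * ennreal (g (w * u) / u)"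
      if u: "u > 0"
    proof -
      have "0 \<le> g (w * u)" "g (w * u) \<le> 1 / (1 + \<bar>\<gamma> * a + ln u\<bar>)"
        using u w g_nonneg[of "w * u"] g_le[of "w * u"] by (simp_all add: ln_mult w_def)
      then show ?thesis
        using inv_gamma_weight_split[OF \<alpha> u N large a] u N inv_gamma_density_nonneg[OF \<alpha>, of u]
        by (simp add: ennreal_mult'[symmetric] ennreal_plus[symmetric] del: ennreal_plus)
    qed
    then show "ennreal (\<gamma> * inv_gamma_density \<alpha> u * g (w * u)) * indicator {0<..} u
        \<le> (ennreal (2 / N) * ennreal (inv_gamma_density \<alpha> u)
            + ennreal (4 / N) * ennreal (g (w * u) / u)) * indicator {0<..} u"
      by (auto split: split_indicator)
  qed
  also have "\<dots> = ennreal (2 / N) * (\<integral>\<^sup>+u\<in>{0<..}. ennreal (inv_gamma_density \<alpha> u) \<partial>lborel)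
      + ennreal (4 / N) * (\<integral>\<^sup>+u\<in>{0<..}. ennreal (g (w * u) / u) \<partial>lborel)"
    by (simp add: nn_set_integral_add mult.assoc nn_integral_cmult)
  also have "\<dots> = ennreal (2 / N) + ennreal (4 / N) * (\<integral>\<^sup>+s\<in>{0<..}. ennreal (g s / s) \<partial>lborel)"
    using w by (simp add: nn_integral_inv_gamma_density[OF \<alpha>] nn_integral_Ioi_dilation)
  finally show ?thesis
    by (simp add: w_def)
qed

lemma nn_integral_inv_gamma_mixture_le:
  fixes g :: "real \<Rightarrow> real"
  assumes [measurable]: "g \<in> borel_measurable borel"
    and g_nonneg: "\<And>s. s > 0 \<Longrightarrow> 0 \<le> g s"
    and g_le: "\<And>s. s > 0 \<Longrightarrow> g s \<le> 1 / (1 + \<bar>ln s\<bar>)"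
    and N: "N > 0" and \<alpha>: "\<alpha> > 0" and \<gamma>: "\<gamma> > 0" and a: "N \<le> \<bar>a\<bar>"
  shows "(\<integral>\<^sup>+u\<in>{0<..}. ennreal (\<gamma> * inv_gamma_density \<alpha> u * g (exp (\<gamma> * a) * u)) \<partial>lborel)
         \<le> ennreal (4 / N) * (1 + (\<integral>\<^sup>+s\<in>{0<..}. ennreal (g s / s) \<partial>lborel))"
    (is "?I \<le> ennreal (4 / N) * (1 + ?J)")
proof (cases "\<gamma> * N \<le> 4")
  case True
  have "g s \<le> 1" if "s > 0" for s
    using g_le[OF that] by (smt (verit) abs_ge_zero divide_le_eq_1)
  then have "?I \<le> ennreal \<gamma>"
    using g_nonneg \<alpha> \<gamma> by (intro nn_integral_inv_gamma_mixture_le_bounded) auto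
  also have "\<dots> \<le> ennreal (4 / N)"
    using True N by (intro ennreal_leI) (simp add: pos_le_divide_eq)
  finally show ?thesis
    by (simp add: distrib_left add_increasing2)
next
  case False
  then have "?I \<le> ennreal (2 / N) + ennreal (4 / N) * ?J"
    using assms by (intro nn_integral_inv_gamma_mixture_le_far) auto
  also have "\<dots> \<le> ennreal (4 / N) + ennreal (4 / N) * ?J"
    using N by (intro add_right_mono ennreal_leI divide_right_mono) auto
  finally show ?thesis
    by (simp add: distrib_left)
qed

lemma tailfun_pos:
  assumes "C > 0" and "t \<ge> 0"
  shows "0 < tailfun c C t"
proof -
  have "tailfun c C t = C * loglog_decay c t"
    by (simp add: tailfun_def loglog_decay_def)
  then show ?thesis
    using assms loglog_decay_pos[of t c] by simp
qed

lemma fS_le_inv_gamma_mixture: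
  assumes dominated: "\<And>s. s > 0 \<Longrightarrow> s * \<pi> s \<le> M\<^sub>0 * loglog_envelope c s"
    and t: "t > 0" and C: "C > 0" and \<alpha>: "\<alpha> > 0" and \<gamma>: "\<gamma> > 0"
  shows "fS \<pi> c C \<alpha> z \<gamma> t \<le> ennreal (M\<^sub>0 / tailfun c C t) *
     (\<integral>\<^sup>+u\<in>{0<..}. ennreal (\<gamma> * inv_gamma_density \<alpha> u *
        loglog_envelope c (exp (\<gamma> * (ln t + z)) * u)) \<partial>lborel)"
proof -
  define T where "T = tailfun c C t"
  define w where "w = exp (\<gamma> * (ln t + z))"
  have T: "T > 0"
    using C t by (simp add: T_def tailfun_pos)
  have w: "w > 0" "t powr \<gamma> * exp (\<gamma> * z) = w"
    using t by (simp_all add: w_def powr_def distrib_left exp_add mult.commute)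
  have "fS \<pi> c C \<alpha> z \<gamma> t
      = (\<integral>\<^sup>+u\<in>{0<..}. ennreal (\<gamma> * inv_gamma_density \<alpha> u * (w * u * \<pi> (w * u)) / T) \<partial>lborel)"
    unfolding fS_def w(2) T_def by (intro nn_integral_cong) (simp add: inv_gamma_density_def mult_ac)
  also have "\<dots> \<le> (\<integral>\<^sup>+u. ennreal (M\<^sub>0 / T) *
      (ennreal (\<gamma> * inv_gamma_density \<alpha> u * loglog_envelope c (w * u)) * indicator {0<..} u) \<partial>lborel)"
  proof (intro nn_integral_mono)
    fix u :: real
    have "\<gamma> * inv_gamma_density \<alpha> u * (w * u * \<pi> (w * u)) / T
        \<le> M\<^sub>0 / T * (\<gamma> * inv_gamma_density \<alpha> u * loglog_envelope c (w * u))" if "u > 0"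
    proof -
      have "\<gamma> * inv_gamma_density \<alpha> u * (w * u * \<pi> (w * u))
          \<le> \<gamma> * inv_gamma_density \<alpha> u * (M\<^sub>0 * loglog_envelope c (w * u))"
        using that w \<gamma> \<alpha> dominated[of "w * u"]
        by (intro mult_left_mono) (auto simp: inv_gamma_density_nonneg)
      then show ?thesis
        using T by (simp add: divide_right_mono field_simps)
    qed
    moreover have "0 \<le> \<gamma> * inv_gamma_density \<alpha> u * loglog_envelope c (w * u)" if "u > 0"
      using that w \<gamma> \<alpha> by (simp add: inv_gamma_density_nonneg loglog_envelope_nonneg)
    ultimately show "ennreal (\<gamma> * inv_gamma_density \<alpha> u * (w * u * \<pi> (w * u)) / T) * indicator {0<..} u
        \<le> ennreal (M\<^sub>0 / T) * (ennreal (\<gamma> * inv_gamma_density \<alpha> u * loglog_envelope c (w * u))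
            * indicator {0<..} u)"
      by (auto simp: ennreal_mult''[symmetric] intro!: ennreal_leI split: split_indicator)
  qed
  also have "\<dots> = ennreal (M\<^sub>0 / T) *
      (\<integral>\<^sup>+u\<in>{0<..}. ennreal (\<gamma> * inv_gamma_density \<alpha> u * loglog_envelope c (w * u)) \<partial>lborel)"
    by (rule nn_integral_cmult) measurable
  finally show ?thesis
    by (simp add: T_def w_def)
qed

theorem lemmaS7:
  fixes \<pi> :: "real \<Rightarrow> real" and c C M\<^sub>0 N t :: real and x :: "real ^ 'p"
  assumes dens: "prob_density_pos \<pi>"
    and c_pos: "c > 0" and C_pos: "C > 0" and M0_pos: "M\<^sub>0 > 0"
    and asym: "(\<lambda>s. s * \<pi> s) \<sim>[at_top] tailfun c C"
    and bound: "\<forall>s>0. s * \<pi> s \<le> M\<^sub>0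
        * (1 / (1 + ln (1 + 1 / s))) * (1 / (1 + ln (1 + s)))
        * (1 / (1 + ln (1 + ln (1 + 1 / s))) powr (1 + c))
        * (1 / (1 + ln (1 + ln (1 + s))) powr (1 + c))"
    and N_pos: "N > 0" and t_pos: "t > 0"
  shows "\<exists>M>0. \<forall>\<alpha> (\<beta>::real ^ 'p) \<gamma>. \<alpha> > 0 \<longrightarrow> \<gamma> > 0 \<longrightarrow> \<bar>ln t + x \<bullet> \<beta>\<bar> \<ge> N \<longrightarrow>
           fS \<pi> c C \<alpha> (x \<bullet> \<beta>) \<gamma> t \<le> ennreal (M * (1 + ln (1 + \<gamma>)))"
proof -
  have dominated: "s * \<pi> s \<le> M\<^sub>0 * loglog_envelope c s" if "s > 0" for s
    using bound that by (simp add: loglog_envelope_def loglog_decay_def mult_ac)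
  define T where "T = tailfun c C t"
  have T: "T > 0"
    using C_pos t_pos by (simp add: T_def tailfun_pos)
  define I where "I = (\<integral>\<^sup>+s\<in>{0<..}. ennreal (loglog_envelope c s / s) \<partial>lborel)"
  have I: "I = ennreal (enn2real I)"
    using nn_integral_loglog_envelope_div_finite[OF c_pos] by (simp add: I_def)
  define M where "M = M\<^sub>0 / T * (4 / N) * (1 + enn2real I)"
  have M: "M > 0"
    using M0_pos T N_pos by (simp add: M_def add_pos_nonneg)
  show ?thesis
  proof (intro exI[of _ M] conjI allI impI M)
    fix \<alpha> \<gamma> :: real and \<beta> :: "real ^ 'p"
    assume \<alpha>: "\<alpha> > 0" and \<gamma>: "\<gamma> > 0" and far: "\<bar>ln t + x \<bullet> \<beta>\<bar> \<ge> N"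
    have "fS \<pi> c C \<alpha> (x \<bullet> \<beta>) \<gamma> t \<le> ennreal (M\<^sub>0 / T) * (\<integral>\<^sup>+u\<in>{0<..}. ennreal
        (\<gamma> * inv_gamma_density \<alpha> u * loglog_envelope c (exp (\<gamma> * (ln t + x \<bullet> \<beta>)) * u)) \<partial>lborel)"
      unfolding T_def using dominated t_pos C_pos \<alpha> \<gamma> by (rule fS_le_inv_gamma_mixture)
    also have "\<dots> \<le> ennreal (M\<^sub>0 / T) * (ennreal (4 / N) * (1 + I))"
      unfolding I_def using c_pos N_pos \<alpha> \<gamma> far
      by (intro mult_left_mono nn_integral_inv_gamma_mixture_le)
        (auto intro: loglog_envelope_nonneg loglog_envelope_le)
    also have "\<dots> = ennreal M"
    proof -
      have "1 + I = ennreal (1 + enn2real I)"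
        by (metis I ennreal_1 ennreal_plus enn2real_nonneg zero_le_one)
      then show ?thesis
        unfolding M_def using M0_pos T N_pos
        by (simp add: mult.assoc ennreal_mult'[symmetric] del: ennreal_plus)
    qed
    also have "\<dots> \<le> ennreal (M * (1 + ln (1 + \<gamma>)))"
      using M \<gamma> by (intro ennreal_leI) simp
    finally show "fS \<pi> c C \<alpha> (x \<bullet> \<beta>) \<gamma> t \<le> ennreal (M * (1 + ln (1 + \<gamma>)))" .
  qed
qed

end
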